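(* For integers $N\ge 3$ and $\Omega\in[-\pi,\pi)$ with $\Omega \notin \{0, 2\pi/N\}$, define $$Z(\Omega) = \frac{|\sin(N\Omega/2)|}{N}\left|\frac{1}{\sin(\Omega/2)} - \frac{1}{\sin(\Omega/2 - \pi/N)}\right| .$$ Let $\Omega$ be uniformly distributed on $[-\pi,\pi)\setminus[-0.5\pi/N,\,2.5\pi/N]$. Then there exist constants $C>0$ and $N_0$ (independent of $N$) such that $\mathbb E[Z(\Omega)^2] \le C/N$ for all $N \ge N_0$.
   Context: The quantity $Z(\Omega)$ is the magnitude of the output of a fixed two-tap correlator applied to the responses $[D_N(\Omega), D_N(\Omega-2\pi/N)]$ of an interferer at spatial frequency $\Omega$ in two adjacent DFT bins, where $D_N(\omega)=\frac1N\sum_{k=0}^{N-1}e^{j\omega k}$. *)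

theory Defs
  imports "HOL-Analysis.Analysis"
begin

definition Zfun :: "nat \<Rightarrow> real \<Rightarrow> real" where
  "Zfun N \<Omega> = \<bar>sin (real N * \<Omega> / 2)\<bar> / real N *
      \<bar>1 / sin (\<Omega> / 2) - 1 / sin (\<Omega> / 2 - pi / real N)\<bar>"

definition OmegaSet :: "nat \<Rightarrow> real set" where
  "OmegaSet N = {-pi..<pi} - {-(1/2) * pi / real N .. (5/2) * pi / real N}"

definition EZ2 :: "nat \<Rightarrow> real" where
  "EZ2 N = (LINT \<Omega>:OmegaSet N|lborel. (Zfun N \<Omega>)^2) / measure lborel (OmegaSet N)"

end

theory Submission
  imports Defs
begin

text \<open>
  Away from the excluded interval both sines in the denominators of \<open>Z(\<Omega>)\<close> are bounded below
  by a multiple of \<open>|\<Omega>|\<close>, while the sine is 1-Lipschitz and their arguments differ by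
  \<open>\<pi>/N\<close>; hence \<open>Z(\<Omega>) = O(1 / (N\<^sup>2 \<Omega>\<^sup>2))\<close>. The excluded interval keeps
  \<open>|\<Omega>| \<ge> \<pi>/(2N)\<close>, and \<open>\<integral>\<^bsub>|\<Omega>| \<ge> \<pi>/(2N)\<^esub> \<Omega>\<^sup>-\<^sup>4 = O(N\<^sup>3)\<close>, so
  \<open>\<integral> Z\<^sup>2 = O(1/N)\<close>; the support has measure at least \<open>\<pi>/2\<close>.
\<close>

lemma sin_ge_half:
  fixes y :: real
  assumes "0 \<le> y" "y \<le> pi / 2"
  shows "y / 2 \<le> sin y"
proof -
  have "\<bar>sin y - (\<Sum>m<3. sin_coeff m * y ^ m)\<bar> \<le> inverse (fact 3) * \<bar>y\<bar> ^ 3"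
    by (rule Maclaurin_sin_bound)
  then have taylor: "\<bar>sin y - y\<bar> \<le> y ^ 3 / 6"
    using assms by (simp add: lessThan_nat_numeral sin_coeff_def fact_numeral)
  have "y ^ 2 \<le> 1.6 ^ 2"
    using assms pi_approx(2) by (intro power_mono) auto
  then have "y ^ 2 \<le> 3"
    by (simp add: power_divide)
  then have "y * y ^ 2 \<le> y * 3"
    using assms by (intro mult_left_mono) auto
  then have "y ^ 3 / 6 \<le> y / 2"
    by (simp add: power3_eq_cube power2_eq_square)
  then show ?thesis
    using taylor by linarith
qed

lemma abs_sin_ge_abs_div_6:
  fixes y :: real
  assumes "\<bar>y\<bar> \<le> 5 * pi / 6"
  shows "\<bar>y\<bar> / 6 \<le> \<bar>sin y\<bar>"
proof -
  have nonneg: "z / 6 \<le> sin z" if "0 \<le> z" "z \<le> 5 * pi / 6" for z :: real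
  proof (cases "z \<le> pi / 2")
    case True
    then show ?thesis
      using sin_ge_half[of z] that by linarith
  next
    case False
    have "sin (pi / 6) \<le> sin (pi - z)"
      using False that by (intro sin_monotone_2pi_le) auto
    then have "1 / 2 \<le> sin z"
      by (simp add: sin_30)
    moreover have "pi \<le> 3.2"
      using pi_approx(2) by simp
    then have "z / 6 \<le> 1 / 2"
      using that by linarith
    ultimately show ?thesis
      by linarith
  qed
  show ?thesis
    using nonneg[of y] nonneg[of "- y"] assms by (cases "0 \<le> y") auto
qed

lemma abs_sin_diff_le: "\<bar>sin x - sin y\<bar> \<le> \<bar>x - y\<bar>" for x y :: real
proof -
  have "\<bar>sin x - sin y\<bar> = 2 * \<bar>sin ((x - y) / 2)\<bar> * \<bar>cos ((x + y) / 2)\<bar>"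
    by (simp add: sin_diff_sin abs_mult)
  also have "\<dots> \<le> 2 * \<bar>(x - y) / 2\<bar> * 1"
    by (intro mult_mono abs_sin_x_le_abs_x) auto
  finally show ?thesis
    by simp
qed

lemma abs_inverse_sin_diff_le:
  fixes a b :: real
  assumes "sin a \<noteq> 0" "sin b \<noteq> 0"
  shows "\<bar>1 / sin a - 1 / sin b\<bar> \<le> \<bar>a - b\<bar> / (\<bar>sin a\<bar> * \<bar>sin b\<bar>)"
proof -
  have "\<bar>1 / sin a - 1 / sin b\<bar> = \<bar>sin b - sin a\<bar> / (\<bar>sin a\<bar> * \<bar>sin b\<bar>)"
    using assms by (simp add: field_simps abs_mult)
  also have "\<dots> \<le> \<bar>a - b\<bar> / (\<bar>sin a\<bar> * \<bar>sin b\<bar>)"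
    using abs_sin_diff_le[of b a] by (intro divide_right_mono) auto
  finally show ?thesis .
qed

lemma Zfun_le:
  assumes N: "N \<ge> 3" and \<Omega>: "\<Omega> \<in> OmegaSet N"
  shows "Zfun N \<Omega> \<le> 720 * pi / (real N ^ 2 * \<Omega> ^ 2)"
proof -
  define p where "p = pi / real N"
  have p: "0 < p" "p \<le> pi / 3"
    using N by (auto simp: p_def field_simps)
  have "- (1/2) * pi / real N = - (p / 2)" "(5/2) * pi / real N = 5 * p / 2"
    by (simp_all add: p_def)
  then have \<Omega>_range: "- pi \<le> \<Omega>" "\<Omega> < pi" "\<Omega> < - (p / 2) \<or> 5 * p / 2 < \<Omega>"
    using \<Omega> by (auto simp: OmegaSet_def)
  then have "0 < \<bar>\<Omega>\<bar>"
    using p by auto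
  have sin_a: "\<bar>\<Omega>\<bar> / 12 \<le> \<bar>sin (\<Omega> / 2)\<bar>"
    using abs_sin_ge_abs_div_6[of "\<Omega> / 2"] \<Omega>_range by auto
  \<comment> \<open>excluding \<open>[-p/2, 5p/2]\<close> gives \<open>|\<Omega>/2 - p| \<ge> |\<Omega>|/10\<close>\<close>
  have sin_b: "\<bar>\<Omega>\<bar> / 60 \<le> \<bar>sin (\<Omega> / 2 - p)\<bar>"
    using abs_sin_ge_abs_div_6[of "\<Omega> / 2 - p"] \<Omega>_range p by auto
  have "\<bar>1 / sin (\<Omega> / 2) - 1 / sin (\<Omega> / 2 - p)\<bar>
          \<le> p / (\<bar>sin (\<Omega> / 2)\<bar> * \<bar>sin (\<Omega> / 2 - p)\<bar>)"
    using abs_inverse_sin_diff_le[of "\<Omega> / 2" "\<Omega> / 2 - p"] sin_a sin_b \<open>0 < \<bar>\<Omega>\<bar>\<close> p by auto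
  also have "\<dots> \<le> p / ((\<bar>\<Omega>\<bar> / 12) * (\<bar>\<Omega>\<bar> / 60))"
    using sin_a sin_b \<open>0 < \<bar>\<Omega>\<bar>\<close> p by (intro divide_left_mono mult_mono mult_pos_pos) auto
  also have "\<dots> = 720 * p / \<Omega> ^ 2"
    by (simp add: power2_eq_square field_simps)
  finally have "\<bar>1 / sin (\<Omega> / 2) - 1 / sin (\<Omega> / 2 - p)\<bar> \<le> 720 * p / \<Omega> ^ 2" .
  then have "Zfun N \<Omega> \<le> 1 / real N * (720 * p / \<Omega> ^ 2)"
    unfolding Zfun_def p_def using N by (intro mult_mono divide_right_mono) auto
  also have "\<dots> = 720 * pi / (real N ^ 2 * \<Omega> ^ 2)"
    by (simp add: p_def power2_eq_square field_simps)
  finally show ?thesis .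
qed

lemma OmegaSet_subset:
  assumes "N > 0"
  shows "OmegaSet N \<subseteq> {- pi .. - (pi / (2 * N))} \<union> {pi / (2 * N) .. pi}"
proof -
  have "pi / (2 * N) \<le> (5/2) * pi / N"
    using assms by (simp add: field_simps)
  then show ?thesis
    by (auto simp: OmegaSet_def)
qed

lemma measure_OmegaSet_ge:
  assumes "N > 0"
  shows "pi / 2 \<le> measure lborel (OmegaSet N)"
proof -
  have "- pi / 2 \<le> - (1/2) * pi / N"
    using assms by (simp add: field_simps)
  then have "{- pi ..< - pi / 2} \<subseteq> OmegaSet N"
    by (auto simp: OmegaSet_def)
  moreover have "OmegaSet N \<in> fmeasurable lborel"
    unfolding OmegaSet_def by (intro fmeasurable_Diff fmeasurableI) auto
  ultimately show ?thesis
    using measure_mono_fmeasurable[of "{- pi ..< - pi / 2}" "OmegaSet N" lborel] by simp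
qed

lemma set_integral_inverse_power:
  fixes c d :: real
  assumes "c \<le> d" "0 \<notin> {c..d}" "n > 0"
  shows "set_integrable lborel {c..d} (\<lambda>x. 1 / x ^ Suc n)"
    and "(LINT x:{c..d}|lborel. 1 / x ^ Suc n) = (1 / c ^ n - 1 / d ^ n) / n"
proof -
  have cont: "continuous_on {c..d} (\<lambda>x. 1 / x ^ Suc n)"
    using assms by (intro continuous_intros) auto
  show "set_integrable lborel {c..d} (\<lambda>x. 1 / x ^ Suc n)"
    by (rule borel_integrable_atLeastAtMost'[OF cont])
  have "((\<lambda>x. - (1 / x ^ n) / n) has_vector_derivative 1 / x ^ Suc n) (at x within {c..d})"
    if "x \<in> {c..d}" for x
  proof -
    have "x \<noteq> 0"
      using assms that by auto
    then have "((\<lambda>x. - (1 / x ^ n) / n) has_real_derivative 1 / x ^ Suc n) (at x)"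
      using assms(3) by (auto intro!: derivative_eq_intros simp: field_simps power_Suc2 power_diff)
    then show ?thesis
      by (simp add: has_real_derivative_iff_has_vector_derivative has_vector_derivative_at_within)
  qed
  then have "(LINT x:{c..d}|lborel. 1 / x ^ Suc n) = - (1 / d ^ n) / n - - (1 / c ^ n) / n"
    unfolding set_lebesgue_integral_def using assms(1) cont by (intro integral_FTC_atLeastAtMost) auto
  then show "(LINT x:{c..d}|lborel. 1 / x ^ Suc n) = (1 / c ^ n - 1 / d ^ n) / n"
    by (simp add: diff_divide_distrib)
qed

lemma set_integral_inverse_pow4_symmetric:
  fixes c d :: real
  assumes "0 < c" "c \<le> d"
  shows "set_integrable lborel ({- d .. - c} \<union> {c..d}) (\<lambda>x. 1 / x ^ 4)"
    and "(LINT x:{- d .. - c} \<union> {c..d}|lborel. 1 / x ^ 4) \<le> 2 / (3 * c ^ 3)"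
proof -
  note neg = set_integral_inverse_power[of "- d" "- c" 3] and pos = set_integral_inverse_power[of c d 3]
  have int_neg: "set_integrable lborel {- d .. - c} (\<lambda>x. 1 / x ^ 4)"
    and int_pos: "set_integrable lborel {c..d} (\<lambda>x. 1 / x ^ 4)"
    using neg(1) pos(1) assms by auto
  then show "set_integrable lborel ({- d .. - c} \<union> {c..d}) (\<lambda>x. 1 / x ^ 4)"
    by (intro set_integrable_Un) auto
  have "(LINT x:{- d .. - c} \<union> {c..d}|lborel. 1 / x ^ 4)
          = (LINT x:{- d .. - c}|lborel. 1 / x ^ 4) + (LINT x:{c..d}|lborel. 1 / x ^ 4)"
    using int_neg int_pos assms by (intro set_integral_Un) auto
  also have "\<dots> = 2 * (1 / c ^ 3 - 1 / d ^ 3) / 3"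
    using neg(2) pos(2) assms by (simp add: power_minus_odd)
  also have "\<dots> \<le> 2 / (3 * c ^ 3)"
    using assms by simp
  finally show "(LINT x:{- d .. - c} \<union> {c..d}|lborel. 1 / x ^ 4) \<le> 2 / (3 * c ^ 3)" .
qed

lemma set_integral_dominated_subset:
  fixes f g :: "'a \<Rightarrow> real"
  assumes g: "set_integrable M B g" and "A \<subseteq> B" and f: "set_borel_measurable M A f"
    and dom: "\<And>x. x \<in> A \<Longrightarrow> \<bar>f x\<bar> \<le> g x" and g_nonneg: "\<And>x. x \<in> B \<Longrightarrow> 0 \<le> g x"
  shows "set_integrable M A f" and "(LINT x:A|M. f x) \<le> (LINT x:B|M. g x)"
proof -
  have le: "indicator A x * f x \<le> indicator B x * g x"
    and norm_le: "norm (indicator A x * f x) \<le> norm (indicator B x * g x)" for x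
    using dom[of x] g_nonneg[of x] \<open>A \<subseteq> B\<close> by (auto simp: indicator_def)
  show int: "set_integrable M A f"
    using g f unfolding set_integrable_def set_borel_measurable_def
    by (auto intro: Bochner_Integration.integrable_bound[where f = "\<lambda>x. indicator B x * g x"] norm_le)
  show "(LINT x:A|M. f x) \<le> (LINT x:B|M. g x)"
    using int g unfolding set_integrable_def set_lebesgue_integral_def
    by (auto intro: integral_mono le)
qed

lemma set_integral_Zfun_sq_le:
  assumes N: "N \<ge> 3"
  shows "set_integrable lborel (OmegaSet N) (\<lambda>\<Omega>. (Zfun N \<Omega>) ^ 2)"
    and "(LINT \<Omega>:OmegaSet N|lborel. (Zfun N \<Omega>) ^ 2) \<le> 16 * 720 ^ 2 / (3 * pi * N)"
proof -
  define c where "c = pi / (2 * N)"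
  define A where "A = (720 * pi) ^ 2 / real N ^ 4"
  define T where "T = {- pi .. - c} \<union> {c..pi}"
  have c: "0 < c" "c \<le> pi"
    using N by (auto simp: c_def field_simps)
  have int_T: "set_integrable lborel T (\<lambda>x. A * (1 / x ^ 4))"
    unfolding T_def by (rule set_integrable_mult_right) (rule set_integral_inverse_pow4_symmetric(1)[OF c])
  have "OmegaSet N \<subseteq> T"
    using OmegaSet_subset[of N] N unfolding T_def c_def by simp
  moreover have "set_borel_measurable lborel (OmegaSet N) (\<lambda>\<Omega>. (Zfun N \<Omega>) ^ 2)"
    unfolding set_borel_measurable_def Zfun_def OmegaSet_def by measurable
  moreover have "\<bar>(Zfun N \<Omega>) ^ 2\<bar> \<le> A * (1 / \<Omega> ^ 4)" if "\<Omega> \<in> OmegaSet N" for \<Omega>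
  proof -
    have "(Zfun N \<Omega>) ^ 2 \<le> (720 * pi / (real N ^ 2 * \<Omega> ^ 2)) ^ 2"
      using Zfun_le[OF N that] by (intro power_mono) (auto simp: Zfun_def)
    also have "\<dots> = A * (1 / \<Omega> ^ 4)"
      by (simp add: A_def power_divide power_mult_distrib flip: power_mult)
    finally show ?thesis
      by simp
  qed
  moreover have "0 \<le> A * (1 / x ^ 4)" for x :: real
    by (simp add: A_def)
  ultimately have dominated:
      "set_integrable lborel (OmegaSet N) (\<lambda>\<Omega>. (Zfun N \<Omega>) ^ 2)"
      "(LINT \<Omega>:OmegaSet N|lborel. (Zfun N \<Omega>) ^ 2) \<le> (LINT x:T|lborel. A * (1 / x ^ 4))"
    using set_integral_dominated_subset[OF int_T] by blast+
  then show "set_integrable lborel (OmegaSet N) (\<lambda>\<Omega>. (Zfun N \<Omega>) ^ 2)"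
    by simp
  have "(LINT x:T|lborel. A * (1 / x ^ 4)) = A * (LINT x:T|lborel. 1 / x ^ 4)"
    by (rule set_integral_mult_right)
  also have "\<dots> \<le> A * (2 / (3 * c ^ 3))"
    using set_integral_inverse_pow4_symmetric(2)[OF c] unfolding T_def
    by (intro mult_left_mono) (auto simp: A_def)
  also have "\<dots> = 16 * 720 ^ 2 / (3 * pi * N)"
    using N by (simp add: A_def c_def field_simps power_mult_distrib eval_nat_numeral)
  finally show "(LINT \<Omega>:OmegaSet N|lborel. (Zfun N \<Omega>) ^ 2) \<le> 16 * 720 ^ 2 / (3 * pi * N)"
    using dominated(2) by linarith
qed

theorem mainTheorem7:
  shows "\<exists>C::real. C > 0 \<and> (\<exists>N0::nat. \<forall>N::nat. N \<ge> 3 \<and> N \<ge> N0 \<longrightarrow>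
           set_integrable lborel (OmegaSet N) (\<lambda>\<Omega>. (Zfun N \<Omega>)^2) \<and>
           EZ2 N \<le> C / real N)"
proof (intro exI conjI allI impI)
  show "(0::real) < 32 * 720 ^ 2 / (3 * pi ^ 2)"
    by simp
  fix N :: nat
  assume "3 \<le> N \<and> 3 \<le> N"
  then have N: "N \<ge> 3"
    by simp
  then show "set_integrable lborel (OmegaSet N) (\<lambda>\<Omega>. (Zfun N \<Omega>) ^ 2)"
    by (rule set_integral_Zfun_sq_le(1))
  have "0 \<le> (LINT \<Omega>:OmegaSet N|lborel. (Zfun N \<Omega>) ^ 2)"
    unfolding set_lebesgue_integral_def by (auto intro: Bochner_Integration.integral_nonneg)
  then have "EZ2 N \<le> (16 * 720 ^ 2 / (3 * pi * N)) / (pi / 2)"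
    unfolding EZ2_def using set_integral_Zfun_sq_le(2)[OF N] measure_OmegaSet_ge[of N] N
    by (intro frac_le) auto
  also have "\<dots> = 32 * 720 ^ 2 / (3 * pi ^ 2) / real N"
    by (simp add: field_simps power2_eq_square)
  finally show "EZ2 N \<le> 32 * 720 ^ 2 / (3 * pi ^ 2) / real N" .
qed

end
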